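(* Let $\mathcal{C}$ be a small elegant Reedy category, with face maps the morphisms of $\mathcal{C}^+$ and degeneracy maps the morphisms of $\mathcal{C}^-$. Assume the following for every face map $f\colon a\to c$ and every morphism $g\colon b\to c$ of $\mathcal{C}$: - a pullback of $f$ along $g$ exists in $\mathcal{C}$; - in this pullback square, the base change of $f$ along $g$ is a face map; - the base change of $g$ along $f$ is a face map if $g$ is a face map, and a degeneracy map if $g$ is a degeneracy map. Then the functor $\operatorname{colim}\colon \widehat{\mathcal{C}}\to\mathbf{Set}$ preserves monomorphisms.
   Context: A Reedy category is a category $\mathcal{C}$ with a degree function on objects and wide subcategories $\mathcal{C}^+$ (face maps, which raise degree unless identities) and $\mathcal{C}^-$ (degeneracy maps, which lower degree unless identities), such that every morphism factors uniquely as a degeneracy map followed by a face map. It is elegant (in the sense of Bergner–Rezk) if for every presheaf $X$ on $\mathcal{C}$ and every $x\in X(r)$ there is a unique pair $(\sigma\colon r\to s,\ y\in X(s))$ with $\sigma$ a degeneracy map, $y$ nondegenerate and $x=\sigma^* y$; here $y$ is nondegenerate if it is not of the form $\tau^*z$ for a non-identity degeneracy map $\tau$. $\widehat{\mathcal{C}}$ denotes presheaves of sets on $\mathcal{C}$. The colimit of a presheaf is the set of connected components of its category of elements. *)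

theory Defs
  imports Main
begin

text \<open>A small category: a set of objects and a set of arrows (inside ambient types),
  domain, codomain, identities and composition. Comp g f is g after f
  (defined when Cod f = Dom g).\<close>

record ('o, 'm) cat =
  Obj  :: "'o set"
  Arr  :: "'m set"
  Dom  :: "'m \<Rightarrow> 'o"
  Cod  :: "'m \<Rightarrow> 'o"
  Idm  :: "'o \<Rightarrow> 'm"
  Comp :: "'m \<Rightarrow> 'm \<Rightarrow> 'm"

definition is_category :: "('o, 'm) cat \<Rightarrow> bool" where
  "is_category C \<longleftrightarrow>
     (\<forall>f\<in>Arr C. Dom C f \<in> Obj C \<and> Cod C f \<in> Obj C) \<and>
     (\<forall>a\<in>Obj C. Idm C a \<in> Arr C \<and> Dom C (Idm C a) = a \<and> Cod C (Idm C a) = a) \<and>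
     (\<forall>f\<in>Arr C. \<forall>g\<in>Arr C. Cod C f = Dom C g \<longrightarrow>
         Comp C g f \<in> Arr C \<and> Dom C (Comp C g f) = Dom C f \<and> Cod C (Comp C g f) = Cod C g) \<and>
     (\<forall>f\<in>Arr C. Comp C (Idm C (Cod C f)) f = f \<and> Comp C f (Idm C (Dom C f)) = f) \<and>
     (\<forall>f\<in>Arr C. \<forall>g\<in>Arr C. \<forall>h\<in>Arr C. Cod C f = Dom C g \<longrightarrow> Cod C g = Dom C h \<longrightarrow>
         Comp C h (Comp C g f) = Comp C (Comp C h g) f)"

definition wide_subcat :: "('o, 'm) cat \<Rightarrow> 'm set \<Rightarrow> bool" where
  "wide_subcat C S \<longleftrightarrow> S \<subseteq> Arr C \<and> (\<forall>a\<in>Obj C. Idm C a \<in> S) \<and>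
     (\<forall>f\<in>S. \<forall>g\<in>S. Cod C f = Dom C g \<longrightarrow> Comp C g f \<in> S)"

text \<open>Reedy structure: degree function deg (valued in a well-order), face maps Fp
  (the arrows of C^+) and degeneracy maps Fm (the arrows of C^-).\<close>
definition is_reedy :: "('o, 'm) cat \<Rightarrow> ('o \<Rightarrow> 'd::wellorder) \<Rightarrow> 'm set \<Rightarrow> 'm set \<Rightarrow> bool" where
  "is_reedy C deg Fp Fm \<longleftrightarrow> is_category C \<and> wide_subcat C Fp \<and> wide_subcat C Fm \<and>
     (\<forall>f\<in>Fp. f \<noteq> Idm C (Dom C f) \<longrightarrow> deg (Dom C f) < deg (Cod C f)) \<and>
     (\<forall>f\<in>Fm. f \<noteq> Idm C (Dom C f) \<longrightarrow> deg (Cod C f) < deg (Dom C f)) \<and>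
     (\<forall>f\<in>Arr C. \<exists>!(s, t). s \<in> Fm \<and> t \<in> Fp \<and> Dom C s = Dom C f \<and> Cod C s = Dom C t \<and>
         Cod C t = Cod C f \<and> Comp C t s = f)"

definition is_presheaf :: "('o, 'm) cat \<Rightarrow> ('o \<Rightarrow> 'x set) \<Rightarrow> ('m \<Rightarrow> 'x \<Rightarrow> 'x) \<Rightarrow> bool" where
  "is_presheaf C X act \<longleftrightarrow>
     (\<forall>f\<in>Arr C. \<forall>x\<in>X (Cod C f). act f x \<in> X (Dom C f)) \<and>
     (\<forall>a\<in>Obj C. \<forall>x\<in>X a. act (Idm C a) x = x) \<and>
     (\<forall>f\<in>Arr C. \<forall>g\<in>Arr C. Cod C f = Dom C g \<longrightarrow>
        (\<forall>x\<in>X (Cod C g). act (Comp C g f) x = act f (act g x)))"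

definition is_nat_trans :: "('o, 'm) cat \<Rightarrow> ('o \<Rightarrow> 'x set) \<Rightarrow> ('m \<Rightarrow> 'x \<Rightarrow> 'x)
    \<Rightarrow> ('o \<Rightarrow> 'y set) \<Rightarrow> ('m \<Rightarrow> 'y \<Rightarrow> 'y) \<Rightarrow> ('o \<Rightarrow> 'x \<Rightarrow> 'y) \<Rightarrow> bool" where
  "is_nat_trans C X actX Y actY \<alpha> \<longleftrightarrow>
     (\<forall>a\<in>Obj C. \<forall>x\<in>X a. \<alpha> a x \<in> Y a) \<and>
     (\<forall>f\<in>Arr C. \<forall>x\<in>X (Cod C f). \<alpha> (Dom C f) (actX f x) = actY f (\<alpha> (Cod C f) x))"

text \<open>Monomorphism in the presheaf category (left cancellable), tested against all
  presheaves Z whose elements live in the type 'z.\<close>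
definition is_mono_pshf_wrt :: "('o, 'm) cat \<Rightarrow> ('o \<Rightarrow> 'x set) \<Rightarrow> ('m \<Rightarrow> 'x \<Rightarrow> 'x)
    \<Rightarrow> ('o \<Rightarrow> 'y set) \<Rightarrow> ('m \<Rightarrow> 'y \<Rightarrow> 'y) \<Rightarrow> ('o \<Rightarrow> 'x \<Rightarrow> 'y) \<Rightarrow> 'z itself \<Rightarrow> bool" where
  "is_mono_pshf_wrt C X actX Y actY \<alpha> (_ :: 'z itself) \<longleftrightarrow>
     (\<forall>(Z :: 'o \<Rightarrow> 'z set) actZ \<beta> \<gamma>. is_presheaf C Z actZ \<longrightarrow>
        is_nat_trans C Z actZ X actX \<beta> \<longrightarrow> is_nat_trans C Z actZ X actX \<gamma> \<longrightarrow>
        (\<forall>a\<in>Obj C. \<forall>z\<in>Z a. \<alpha> a (\<beta> a z) = \<alpha> a (\<gamma> a z)) \<longrightarrow>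
        (\<forall>a\<in>Obj C. \<forall>z\<in>Z a. \<beta> a z = \<gamma> a z))"

definition nondegenerate :: "('o, 'm) cat \<Rightarrow> 'm set \<Rightarrow> ('o \<Rightarrow> 'x set) \<Rightarrow> ('m \<Rightarrow> 'x \<Rightarrow> 'x)
    \<Rightarrow> 'o \<Rightarrow> 'x \<Rightarrow> bool" where
  "nondegenerate C Fm X act s y \<longleftrightarrow>
     \<not> (\<exists>\<tau>\<in>Fm. Dom C \<tau> = s \<and> \<tau> \<noteq> Idm C s \<and> (\<exists>z\<in>X (Cod C \<tau>). y = act \<tau> z))"

text \<open>Elegance, with presheaves whose elements live in the type 'e.\<close>
definition elegant_wrt :: "('o, 'm) cat \<Rightarrow> 'm set \<Rightarrow> 'e itself \<Rightarrow> bool" where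
  "elegant_wrt C Fm (_ :: 'e itself) \<longleftrightarrow>
     (\<forall>(X :: 'o \<Rightarrow> 'e set) act. is_presheaf C X act \<longrightarrow>
        (\<forall>r\<in>Obj C. \<forall>x\<in>X r. \<exists>!(\<sigma>, y). \<sigma> \<in> Fm \<and> Dom C \<sigma> = r \<and> y \<in> X (Cod C \<sigma>) \<and>
            nondegenerate C Fm X act (Cod C \<sigma>) y \<and> x = act \<sigma> y))"

text \<open>is_pullback C f g f' g': the square with f : a \<rightarrow> c, g : b \<rightarrow> c,
  f' : P \<rightarrow> b (base change of f along g), g' : P \<rightarrow> a (base change of g along f),
  g f' = f g', is a pullback.\<close>
definition is_pullback :: "('o, 'm) cat \<Rightarrow> 'm \<Rightarrow> 'm \<Rightarrow> 'm \<Rightarrow> 'm \<Rightarrow> bool" where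
  "is_pullback C f g f' g' \<longleftrightarrow>
     f \<in> Arr C \<and> g \<in> Arr C \<and> f' \<in> Arr C \<and> g' \<in> Arr C \<and>
     Cod C f = Cod C g \<and> Dom C f' = Dom C g' \<and> Cod C f' = Dom C g \<and> Cod C g' = Dom C f \<and>
     Comp C g f' = Comp C f g' \<and>
     (\<forall>u\<in>Arr C. \<forall>v\<in>Arr C. Dom C u = Dom C v \<longrightarrow> Cod C u = Dom C g \<longrightarrow> Cod C v = Dom C f \<longrightarrow>
        Comp C g u = Comp C f v \<longrightarrow>
        (\<exists>!h. h \<in> Arr C \<and> Dom C h = Dom C u \<and> Cod C h = Dom C f' \<and>
              Comp C f' h = u \<and> Comp C g' h = v))"

text \<open>Category of elements: objects (a, x) with x \<in> X a; an arrow f gives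
  (Dom f, f^* x) \<rightarrow> (Cod f, x). The colimit is the set of connected components.\<close>
definition elements :: "('o, 'm) cat \<Rightarrow> ('o \<Rightarrow> 'x set) \<Rightarrow> ('o \<times> 'x) set" where
  "elements C X = Sigma (Obj C) X"

definition el_arrows :: "('o, 'm) cat \<Rightarrow> ('o \<Rightarrow> 'x set) \<Rightarrow> ('m \<Rightarrow> 'x \<Rightarrow> 'x) \<Rightarrow> (('o \<times> 'x) \<times> ('o \<times> 'x)) set" where
  "el_arrows C X act = {((Dom C f, act f x), (Cod C f, x)) | f x. f \<in> Arr C \<and> x \<in> X (Cod C f)}"

definition connected :: "('o, 'm) cat \<Rightarrow> ('o \<Rightarrow> 'x set) \<Rightarrow> ('m \<Rightarrow> 'x \<Rightarrow> 'x) \<Rightarrow> (('o \<times> 'x) \<times> ('o \<times> 'x)) set" where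
  "connected C X act = (el_arrows C X act \<union> (el_arrows C X act)\<inverse>)\<^sup>*"

definition colim :: "('o, 'm) cat \<Rightarrow> ('o \<Rightarrow> 'x set) \<Rightarrow> ('m \<Rightarrow> 'x \<Rightarrow> 'x) \<Rightarrow> ('o \<times> 'x) set set" where
  "colim C X act = elements C X // connected C X act"

definition colim_map :: "('o, 'm) cat \<Rightarrow> ('o \<Rightarrow> 'y set) \<Rightarrow> ('m \<Rightarrow> 'y \<Rightarrow> 'y) \<Rightarrow> ('o \<Rightarrow> 'x \<Rightarrow> 'y)
    \<Rightarrow> ('o \<times> 'x) set \<Rightarrow> ('o \<times> 'y) set" where
  "colim_map C Y actY \<alpha> K = connected C Y actY `` ((\<lambda>(a, x). (a, \<alpha> a x)) ` K)"

end

theory Submission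
  imports Defs
begin

text \<open>The colimit of a presheaf is the set of components of its category of elements, so
  it suffices to show: if \<open>\<alpha>(p)\<close> and \<open>\<alpha>(p')\<close> are joined by a zigzag of arrows between
  elements of \<open>Y\<close>, then \<open>p\<close> and \<open>p'\<close> are joined by a zigzag between elements of \<open>X\<close>.
  Since a monomorphism is injective on components, this follows once an element \<open>q\<close> of \<open>X\<close>
  with an arrow \<open>\<alpha>(q) \<rightarrow> e\<close> can be transported, up to connectedness, along every arrow of the
  zigzag. Forward arrows just compose. For a backward arrow \<open>h\<close>, factor \<open>\<alpha>(q) \<rightarrow> e\<close> as a
  degeneracy \<open>s\<close> followed by a face map \<open>t\<close>. In an elegant Reedy category degeneracies have
  sections, so \<open>q\<close> is \<open>s\<^sup>*\<close> of an element sitting over \<open>e\<close> via \<open>t\<close>; base change of \<open>t\<close>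
  along \<open>h\<close> then moves that element across \<open>h\<close>.\<close>

locale category =
  fixes C :: "('o, 'm) cat"
  assumes is_category: "is_category C"
begin

lemma Dom_in_Obj: "f \<in> Arr C \<Longrightarrow> Dom C f \<in> Obj C"
  and Cod_in_Obj: "f \<in> Arr C \<Longrightarrow> Cod C f \<in> Obj C"
  and Idm_in_Arr: "a \<in> Obj C \<Longrightarrow> Idm C a \<in> Arr C"
  and Dom_Idm [simp]: "a \<in> Obj C \<Longrightarrow> Dom C (Idm C a) = a"
  and Cod_Idm [simp]: "a \<in> Obj C \<Longrightarrow> Cod C (Idm C a) = a"
  and Comp_in_Arr: "f \<in> Arr C \<Longrightarrow> g \<in> Arr C \<Longrightarrow> Cod C f = Dom C g \<Longrightarrow> Comp C g f \<in> Arr C"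
  and Dom_Comp [simp]: "f \<in> Arr C \<Longrightarrow> g \<in> Arr C \<Longrightarrow> Cod C f = Dom C g \<Longrightarrow> Dom C (Comp C g f) = Dom C f"
  and Cod_Comp [simp]: "f \<in> Arr C \<Longrightarrow> g \<in> Arr C \<Longrightarrow> Cod C f = Dom C g \<Longrightarrow> Cod C (Comp C g f) = Cod C g"
  and Comp_Idm_left [simp]: "f \<in> Arr C \<Longrightarrow> Comp C (Idm C (Cod C f)) f = f"
  and Comp_Idm_right [simp]: "f \<in> Arr C \<Longrightarrow> Comp C f (Idm C (Dom C f)) = f"
  and Comp_assoc: "f \<in> Arr C \<Longrightarrow> g \<in> Arr C \<Longrightarrow> h \<in> Arr C \<Longrightarrow> Cod C f = Dom C g \<Longrightarrow>
      Cod C g = Dom C h \<Longrightarrow> Comp C h (Comp C g f) = Comp C (Comp C h g) f"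
  using is_category unfolding is_category_def by blast+

lemma Comp_Idm_Idm [simp]: "a \<in> Obj C \<Longrightarrow> Comp C (Idm C a) (Idm C a) = Idm C a"
  using Comp_Idm_left[OF Idm_in_Arr] by simp

end

lemma presheaf_act_in:
  "is_presheaf C X act \<Longrightarrow> f \<in> Arr C \<Longrightarrow> x \<in> X (Cod C f) \<Longrightarrow> act f x \<in> X (Dom C f)"
  and presheaf_act_Idm:
  "is_presheaf C X act \<Longrightarrow> a \<in> Obj C \<Longrightarrow> x \<in> X a \<Longrightarrow> act (Idm C a) x = x"
  and presheaf_act_Comp:
  "is_presheaf C X act \<Longrightarrow> f \<in> Arr C \<Longrightarrow> g \<in> Arr C \<Longrightarrow> Cod C f = Dom C g \<Longrightarrow>
     x \<in> X (Cod C g) \<Longrightarrow> act (Comp C g f) x = act f (act g x)"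
  unfolding is_presheaf_def by blast+

lemma nat_trans_in:
  "is_nat_trans C X actX Y actY \<alpha> \<Longrightarrow> a \<in> Obj C \<Longrightarrow> x \<in> X a \<Longrightarrow> \<alpha> a x \<in> Y a"
  and nat_trans_natural:
  "is_nat_trans C X actX Y actY \<alpha> \<Longrightarrow> f \<in> Arr C \<Longrightarrow> x \<in> X (Cod C f) \<Longrightarrow>
     \<alpha> (Dom C f) (actX f x) = actY f (\<alpha> (Cod C f) x)"
  unfolding is_nat_trans_def by blast+

text \<open>The kernel pair of \<alpha> is a presheaf with two projections that \<alpha> equalizes.\<close>
lemma mono_pshf_imp_inj_on:
  fixes X :: "'o \<Rightarrow> 'x set"
  assumes X: "is_presheaf C X actX" and \<alpha>: "is_nat_trans C X actX Y actY \<alpha>"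
    and mono: "is_mono_pshf_wrt C X actX Y actY \<alpha> TYPE('x \<times> 'x)" and a: "a \<in> Obj C"
  shows "inj_on (\<alpha> a) (X a)"
proof (rule inj_onI)
  define K :: "'o \<Rightarrow> ('x \<times> 'x) set" where "K b = {(x, x'). x \<in> X b \<and> x' \<in> X b \<and> \<alpha> b x = \<alpha> b x'}" for b
  define actK where "actK f = map_prod (actX f) (actX f)" for f
  have "is_presheaf C K actK"
    unfolding is_presheaf_def K_def actK_def
    using presheaf_act_in[OF X] presheaf_act_Idm[OF X] presheaf_act_Comp[OF X] nat_trans_natural[OF \<alpha>]
    by auto
  moreover have "is_nat_trans C K actK X actX (\<lambda>_. fst)" "is_nat_trans C K actK X actX (\<lambda>_. snd)"
    unfolding is_nat_trans_def K_def actK_def by auto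
  ultimately have "\<forall>b\<in>Obj C. \<forall>p\<in>K b. fst p = snd p"
    using mono unfolding is_mono_pshf_wrt_def K_def by fastforce
  moreover fix x x' assume "x \<in> X a" "x' \<in> X a" "\<alpha> a x = \<alpha> a x'"
  ultimately show "x = x'" using a unfolding K_def by fastforce
qed

section \<open>Colimits and zigzags of elements\<close>

text \<open>\<open>f\<close> is an arrow from the image of \<open>q\<close> under \<open>\<alpha>\<close> to \<open>e\<close> in the category of elements of \<open>Y\<close>.\<close>
definition lies_over :: "('o, 'm) cat \<Rightarrow> ('o \<Rightarrow> 'x set) \<Rightarrow> ('m \<Rightarrow> 'y \<Rightarrow> 'y) \<Rightarrow> ('o \<Rightarrow> 'x \<Rightarrow> 'y)
    \<Rightarrow> 'm \<Rightarrow> 'o \<times> 'x \<Rightarrow> 'o \<times> 'y \<Rightarrow> bool" where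
  "lies_over C X actY \<alpha> f q e \<longleftrightarrow> q \<in> elements C X \<and> f \<in> Arr C \<and> Dom C f = fst q \<and>
     Cod C f = fst e \<and> actY f (snd e) = \<alpha> (fst q) (snd q)"

lemma equiv_connected: "equiv UNIV (connected C X act)"
  unfolding connected_def equiv_def
  using refl_rtrancl sym_rtrancl[OF sym_Un_converse] trans_rtrancl by auto

lemma connected_refl [simp]: "(p, p) \<in> connected C X act"
  unfolding connected_def by simp

lemma el_arrows_in_connected: "(p, q) \<in> el_arrows C X act \<Longrightarrow> (p, q) \<in> connected C X act"
  unfolding connected_def by blast

context category
begin

lemma connected_elements:
  assumes X: "is_presheaf C X act" and "(p, q) \<in> connected C X act" "p \<in> elements C X"
  shows "q \<in> elements C X"
  using assms(2)[unfolded connected_def] assms(3)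
proof (induction rule: rtrancl_induct)
  case (step q q')
  then show ?case
    unfolding el_arrows_def elements_def using presheaf_act_in[OF X] Dom_in_Obj Cod_in_Obj by auto
qed

lemma lies_over_el_arrow:
  assumes Y: "is_presheaf C Y actY" and "lies_over C X actY \<alpha> f q e" "(e, e') \<in> el_arrows C Y actY"
  obtains f' where "lies_over C X actY \<alpha> f' q e'"
proof -
  obtain h y where h: "h \<in> Arr C" "y \<in> Y (Cod C h)" "e = (Dom C h, actY h y)" "e' = (Cod C h, y)"
    using assms(3) unfolding el_arrows_def by blast
  have "lies_over C X actY \<alpha> (Comp C h f) q e'"
    using assms(2) h Comp_in_Arr presheaf_act_Comp[OF Y] unfolding lies_over_def by auto
  then show thesis by (rule that)
qed

lemma connected_lies_over:
  assumes Y: "is_presheaf C Y actY"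
    and lift: "\<And>h y f q. h \<in> Arr C \<Longrightarrow> y \<in> Y (Cod C h) \<Longrightarrow> lies_over C X actY \<alpha> f q (Cod C h, y) \<Longrightarrow>
      \<exists>f' q'. (q, q') \<in> connected C X actX \<and> lies_over C X actY \<alpha> f' q' (Dom C h, actY h y)"
    and "(e, e') \<in> connected C Y actY" "lies_over C X actY \<alpha> f q e"
  shows "\<exists>f' q'. (q, q') \<in> connected C X actX \<and> lies_over C X actY \<alpha> f' q' e'"
  using assms(3)[unfolded connected_def]
proof (induction rule: rtrancl_induct)
  case base
  then show ?case using assms(4) unfolding connected_def by blast
next
  case (step e1 e2)
  then obtain f1 q1 where q1: "(q, q1) \<in> connected C X actX" "lies_over C X actY \<alpha> f1 q1 e1" by blast
  from step.hyps(2) show ?case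
  proof
    assume "(e1, e2) \<in> el_arrows C Y actY"
    then show ?thesis using lies_over_el_arrow[OF Y q1(2)] q1(1) by metis
  next
    assume "(e1, e2) \<in> (el_arrows C Y actY)\<inverse>"
    then obtain h y where "h \<in> Arr C" "y \<in> Y (Cod C h)" "e1 = (Cod C h, y)" "e2 = (Dom C h, actY h y)"
      unfolding el_arrows_def by blast
    then obtain f2 q2 where "(q1, q2) \<in> connected C X actX" "lies_over C X actY \<alpha> f2 q2 e2"
      using lift q1(2) by blast
    then show ?thesis using q1(1) equiv_connected by (metis equivE transE)
  qed
qed

lemma inj_on_colim_map:
  assumes X: "is_presheaf C X actX" and Y: "is_presheaf C Y actY"
    and \<alpha>: "is_nat_trans C X actX Y actY \<alpha>"
    and inj: "\<forall>a\<in>Obj C. inj_on (\<alpha> a) (X a)"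
    and lift: "\<And>h y f q. h \<in> Arr C \<Longrightarrow> y \<in> Y (Cod C h) \<Longrightarrow> lies_over C X actY \<alpha> f q (Cod C h, y) \<Longrightarrow>
      \<exists>f' q'. (q, q') \<in> connected C X actX \<and> lies_over C X actY \<alpha> f' q' (Dom C h, actY h y)"
  shows "inj_on (colim_map C Y actY \<alpha>) (colim C X actX)"
proof (rule inj_onI)
  let ?conX = "connected C X actX" and ?conY = "connected C Y actY"
  fix K1 K2 assume "K1 \<in> colim C X actX" "K2 \<in> colim C X actX"
    and image_eq: "colim_map C Y actY \<alpha> K1 = colim_map C Y actY \<alpha> K2"
  then obtain p1 p2 where p1: "p1 \<in> elements C X" "K1 = ?conX `` {p1}"
    and p2: "p2 \<in> elements C X" "K2 = ?conX `` {p2}"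
    unfolding colim_def by (auto elim!: quotientE)
  obtain a1 x1 where a1x1: "p1 = (a1, x1)" by fastforce
  have "p1 \<in> K1" using p1(2) by simp
  then have "(a1, \<alpha> a1 x1) \<in> colim_map C Y actY \<alpha> K2"
    using image_eq a1x1 equiv_connected unfolding colim_map_def by (force simp: equiv_def refl_on_def)
  then obtain q where q: "q \<in> K2" "((fst q, \<alpha> (fst q) (snd q)), (a1, \<alpha> a1 x1)) \<in> ?conY"
    unfolding colim_map_def by auto
  have q_el: "q \<in> elements C X" using connected_elements[OF X _ p2(1)] q(1) p2(2) by blast
  have "lies_over C X actY \<alpha> (Idm C (fst q)) q (fst q, \<alpha> (fst q) (snd q))"
    using q_el Idm_in_Arr presheaf_act_Idm[OF Y] nat_trans_in[OF \<alpha>]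
    unfolding lies_over_def elements_def by auto
  then obtain f q' where q': "(q, q') \<in> ?conX" "lies_over C X actY \<alpha> f q' (a1, \<alpha> a1 x1)"
    using connected_lies_over[OF Y _ q(2)] lift by blast
  have x1: "x1 \<in> X (Cod C f)" using p1(1) q'(2) a1x1 unfolding elements_def lies_over_def by auto
  have "\<alpha> (Dom C f) (actX f x1) = \<alpha> (fst q') (snd q')"
    using nat_trans_natural[OF \<alpha> _ x1] q'(2) a1x1 unfolding lies_over_def by auto
  then have "actX f x1 = snd q'"
    using inj q'(2) presheaf_act_in[OF X _ x1] unfolding lies_over_def elements_def
    by (auto simp: inj_on_def)
  then have "(q', p1) \<in> el_arrows C X actX"
    using q'(2) x1 a1x1 unfolding lies_over_def el_arrows_def by (cases q') auto
  then have "(p2, p1) \<in> ?conX"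
    using q(1) p2(2) q'(1) el_arrows_in_connected equiv_connected by (metis Image_singleton_iff equivE transE)
  then show "K1 = K2" using p1(2) p2(2) equiv_connected by (metis equiv_class_eq)
qed

end

section \<open>Degeneracies split in elegant Reedy categories\<close>

locale reedy_category =
  fixes C :: "('o, 'm) cat" and deg :: "'o \<Rightarrow> 'd::wellorder" and Fp Fm :: "'m set"
  assumes is_reedy: "is_reedy C deg Fp Fm"

sublocale reedy_category \<subseteq> category C
  using is_reedy by unfold_locales (simp add: is_reedy_def)

context reedy_category
begin

lemma face_in_Arr: "t \<in> Fp \<Longrightarrow> t \<in> Arr C"
  and degeneracy_in_Arr: "s \<in> Fm \<Longrightarrow> s \<in> Arr C"
  and Idm_face: "a \<in> Obj C \<Longrightarrow> Idm C a \<in> Fp"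
  and Idm_degeneracy: "a \<in> Obj C \<Longrightarrow> Idm C a \<in> Fm"
  and Comp_degeneracy: "s \<in> Fm \<Longrightarrow> s' \<in> Fm \<Longrightarrow> Cod C s = Dom C s' \<Longrightarrow> Comp C s' s \<in> Fm"
  and degeneracy_lowers_deg: "s \<in> Fm \<Longrightarrow> s \<noteq> Idm C (Dom C s) \<Longrightarrow> deg (Cod C s) < deg (Dom C s)"
  using is_reedy unfolding is_reedy_def wide_subcat_def by blast+

lemma reedy_factorization:
  assumes "f \<in> Arr C"
  obtains s t where "s \<in> Fm" "t \<in> Fp" "Dom C s = Dom C f" "Cod C s = Dom C t"
    "Cod C t = Cod C f" "Comp C t s = f"
  using is_reedy assms unfolding is_reedy_def by fast

lemma reedy_factorization_unique:
  assumes "s \<in> Fm" "t \<in> Fp" "Cod C s = Dom C t" "s' \<in> Fm" "t' \<in> Fp" "Cod C s' = Dom C t'"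
    and "Dom C s = Dom C s'" "Cod C t = Cod C t'" "Comp C t s = Comp C t' s'"
  shows "s = s'" and "t = t'"
proof -
  have "Comp C t s \<in> Arr C" using assms face_in_Arr degeneracy_in_Arr Comp_in_Arr by blast
  then have "\<exists>!(s'', t''). s'' \<in> Fm \<and> t'' \<in> Fp \<and> Dom C s'' = Dom C (Comp C t s) \<and>
      Cod C s'' = Dom C t'' \<and> Cod C t'' = Cod C (Comp C t s) \<and> Comp C t'' s'' = Comp C t s"
    using is_reedy unfolding is_reedy_def by blast
  moreover have "Dom C (Comp C t s) = Dom C s" "Cod C (Comp C t s) = Cod C t"
    using assms face_in_Arr degeneracy_in_Arr by auto
  ultimately have "(s, t) = (s', t')"
    using assms by (simp add: Ex1_def split_beta) blast
  then show "s = s'" "t = t'" by simp_all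
qed

text \<open>Split the retraction as a face map after a degeneracy; uniqueness of the Reedy
  factorization of the identity makes both the face map and the composite degeneracy trivial,
  and then degrees strictly drop around a loop.\<close>
lemma degeneracy_retraction_eq_Idm:
  assumes \<tau>: "\<tau> \<in> Fm" and g: "g \<in> Arr C" "Dom C g = Cod C \<tau>" "Cod C g = Dom C \<tau>"
    and retraction: "Comp C g \<tau> = Idm C (Dom C \<tau>)"
  shows "\<tau> = Idm C (Dom C \<tau>)"
proof (rule ccontr)
  assume \<tau>_ne: "\<tau> \<noteq> Idm C (Dom C \<tau>)"
  define a where "a = Dom C \<tau>"
  have \<tau>_arr: "\<tau> \<in> Arr C" using \<tau> degeneracy_in_Arr by blast
  have a: "a \<in> Obj C" unfolding a_def using \<tau>_arr Dom_in_Obj by blast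
  obtain d t where d: "d \<in> Fm" and t: "t \<in> Fp" and dt: "Dom C d = Dom C g" "Cod C d = Dom C t"
    "Cod C t = Cod C g" "Comp C t d = g"
    using reedy_factorization[OF g(1)] by blast
  have d_arr: "d \<in> Arr C" and t_arr: "t \<in> Arr C" using d t degeneracy_in_Arr face_in_Arr by auto
  have "Comp C t (Comp C d \<tau>) = Idm C a"
    using Comp_assoc[OF \<tau>_arr d_arr t_arr] dt g retraction a_def by simp
  moreover have "Comp C d \<tau> \<in> Fm" using Comp_degeneracy[OF \<tau> d] dt g by simp
  moreover have "Dom C (Comp C d \<tau>) = a" "Cod C (Comp C d \<tau>) = Dom C t"
    using \<tau>_arr d_arr dt g a_def by auto
  ultimately have "Comp C d \<tau> = Idm C a" "t = Idm C a"
    using reedy_factorization_unique[OF _ t _ Idm_degeneracy[OF a] Idm_face[OF a]] a dt g a_def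
    by auto
  then have "Cod C d = a" using dt a by simp
  moreover have "d \<noteq> Idm C (Dom C d)"
    using \<open>Comp C d \<tau> = Idm C a\<close> \<tau>_ne \<tau>_arr dt g a_def by auto
  ultimately have "deg a < deg (Cod C \<tau>)" using degeneracy_lowers_deg[OF d] dt g by simp
  moreover have "deg (Cod C \<tau>) < deg a" using degeneracy_lowers_deg[OF \<tau> \<tau>_ne] a_def by simp
  ultimately show False by simp
qed

end

definition factors_through :: "('o, 'm) cat \<Rightarrow> 'm \<Rightarrow> 'm \<Rightarrow> bool" where
  "factors_through C \<sigma> g \<longleftrightarrow> (\<exists>h\<in>Arr C. Dom C h = Dom C g \<and> Cod C h = Dom C \<sigma> \<and> Comp C \<sigma> h = g)"

text \<open>Two copies of the representable presheaf on \<open>Cod \<sigma>\<close>, glued along the arrows that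
  factor through \<open>\<sigma>\<close>: an arrow \<open>g\<close> is \<open>{g}\<close> in the first copy and \<open>{g, \<sigma>}\<close> in the second,
  unless it factors through \<open>\<sigma>\<close>.\<close>

definition hom_copy :: "('o, 'm) cat \<Rightarrow> 'm \<Rightarrow> bool \<Rightarrow> 'm \<Rightarrow> 'm set" where
  "hom_copy C \<sigma> b g = (if b \<and> \<not> factors_through C \<sigma> g then {g, \<sigma>} else {g})"

definition double_hom :: "('o, 'm) cat \<Rightarrow> 'm \<Rightarrow> 'o \<Rightarrow> 'm set set" where
  "double_hom C \<sigma> a = {hom_copy C \<sigma> b g | b g. g \<in> Arr C \<and> Dom C g = a \<and> Cod C g = Cod C \<sigma>}"

definition double_hom_act :: "('o, 'm) cat \<Rightarrow> 'm \<Rightarrow> 'm \<Rightarrow> 'm set \<Rightarrow> 'm set" where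
  "double_hom_act C \<sigma> f E =
     (if is_singleton E then {Comp C (the_elem E) f}
      else hom_copy C \<sigma> True (Comp C (the_elem (E - {\<sigma>})) f))"

lemma hom_copy_subset: "g \<in> hom_copy C \<sigma> b g" "hom_copy C \<sigma> b g \<subseteq> {g, \<sigma>}"
  unfolding hom_copy_def by auto

lemma double_hom_iff:
  "E \<in> double_hom C \<sigma> a \<longleftrightarrow>
     (\<exists>b. \<exists>g\<in>Arr C. Dom C g = a \<and> Cod C g = Cod C \<sigma> \<and> E = hom_copy C \<sigma> b g)"
  unfolding double_hom_def by blast

context category
begin

lemma factors_through_self: "\<sigma> \<in> Arr C \<Longrightarrow> factors_through C \<sigma> \<sigma>"
  unfolding factors_through_def using Idm_in_Arr[OF Dom_in_Obj]
  by (intro bexI[of _ "Idm C (Dom C \<sigma>)"]) (auto simp: Dom_in_Obj)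

lemma factors_through_Comp:
  assumes "factors_through C \<sigma> g" "\<sigma> \<in> Arr C" "f \<in> Arr C" "g \<in> Arr C" "Dom C g = Cod C f"
  shows "factors_through C \<sigma> (Comp C g f)"
proof -
  obtain h where h: "h \<in> Arr C" "Dom C h = Dom C g" "Cod C h = Dom C \<sigma>" "Comp C \<sigma> h = g"
    using assms(1) unfolding factors_through_def by blast
  then have "Comp C \<sigma> (Comp C h f) = Comp C g f" using Comp_assoc[OF assms(3) h(1) assms(2)] assms by simp
  then show ?thesis
    unfolding factors_through_def using h assms Comp_in_Arr by (intro bexI[of _ "Comp C h f"]) auto
qed

lemma hom_copy_self: "\<sigma> \<in> Arr C \<Longrightarrow> hom_copy C \<sigma> b \<sigma> = {\<sigma>}"
  unfolding hom_copy_def using factors_through_self by simp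

lemma double_hom_act_hom_copy:
  assumes "\<sigma> \<in> Arr C" "f \<in> Arr C" "g \<in> Arr C" "Dom C g = Cod C f"
  shows "double_hom_act C \<sigma> f (hom_copy C \<sigma> b g) = hom_copy C \<sigma> b (Comp C g f)"
proof (cases "b \<and> \<not> factors_through C \<sigma> g")
  case True
  then have "g \<noteq> \<sigma>" using factors_through_self[OF assms(1)] by auto
  then have "\<not> is_singleton {g, \<sigma>}" "{g, \<sigma>} - {\<sigma>} = {g}"
    by (auto simp: is_singleton_def doubleton_eq_iff)
  then show ?thesis using True unfolding double_hom_act_def hom_copy_def by simp
next
  case False
  then have "hom_copy C \<sigma> b g = {g}" "hom_copy C \<sigma> b (Comp C g f) = {Comp C g f}"
    using factors_through_Comp assms unfolding hom_copy_def by auto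
  then show ?thesis unfolding double_hom_act_def by simp
qed

lemma is_presheaf_double_hom:
  assumes \<sigma>: "\<sigma> \<in> Arr C"
  shows "is_presheaf C (double_hom C \<sigma>) (double_hom_act C \<sigma>)"
  unfolding is_presheaf_def
proof (intro conjI ballI impI)
  fix f E assume f: "f \<in> Arr C" and "E \<in> double_hom C \<sigma> (Cod C f)"
  then obtain b g where g: "g \<in> Arr C" "Dom C g = Cod C f" "Cod C g = Cod C \<sigma>"
    and E: "E = hom_copy C \<sigma> b g"
    unfolding double_hom_iff by blast
  have "double_hom_act C \<sigma> f E = hom_copy C \<sigma> b (Comp C g f)"
    using double_hom_act_hom_copy[OF \<sigma> f g(1,2)] E by simp
  moreover have "Comp C g f \<in> Arr C" "Dom C (Comp C g f) = Dom C f" "Cod C (Comp C g f) = Cod C \<sigma>"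
    using f g Comp_in_Arr by auto
  ultimately show "double_hom_act C \<sigma> f E \<in> double_hom C \<sigma> (Dom C f)"
    unfolding double_hom_iff by blast
next
  fix a E assume a: "a \<in> Obj C" and "E \<in> double_hom C \<sigma> a"
  then obtain b g where g: "g \<in> Arr C" "Dom C g = a" and E: "E = hom_copy C \<sigma> b g"
    unfolding double_hom_iff by blast
  then show "double_hom_act C \<sigma> (Idm C a) E = E"
    using double_hom_act_hom_copy[OF \<sigma> Idm_in_Arr[OF a] g(1)] Comp_Idm_right[OF g(1)] a by simp
next
  fix f g E assume fg: "f \<in> Arr C" "g \<in> Arr C" "Cod C f = Dom C g"
    and "E \<in> double_hom C \<sigma> (Cod C g)"
  then obtain b k where k: "k \<in> Arr C" "Dom C k = Cod C g" and E: "E = hom_copy C \<sigma> b k"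
    unfolding double_hom_iff by blast
  have "double_hom_act C \<sigma> (Comp C g f) E = hom_copy C \<sigma> b (Comp C k (Comp C g f))"
    using double_hom_act_hom_copy[OF \<sigma> Comp_in_Arr[OF fg] k(1)] fg k E by simp
  also have "\<dots> = hom_copy C \<sigma> b (Comp C (Comp C k g) f)"
    using Comp_assoc[OF fg(1,2) k(1) fg(3) k(2)[symmetric]] by simp
  also have "\<dots> = double_hom_act C \<sigma> f (double_hom_act C \<sigma> g E)"
    using double_hom_act_hom_copy[OF \<sigma>] Comp_in_Arr fg k E by simp
  finally show "double_hom_act C \<sigma> (Comp C g f) E = double_hom_act C \<sigma> f (double_hom_act C \<sigma> g E)" .
qed

end

context reedy_category
begin

lemma double_hom_Idm_nondegenerate:
  assumes "\<sigma> \<in> Arr C" "\<sigma> \<noteq> Idm C (Cod C \<sigma>)" "Idm C (Cod C \<sigma>) \<in> E"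
  shows "nondegenerate C Fm (double_hom C \<sigma>) (double_hom_act C \<sigma>) (Cod C \<sigma>) E"
  unfolding nondegenerate_def
proof
  assume "\<exists>\<tau>\<in>Fm. Dom C \<tau> = Cod C \<sigma> \<and> \<tau> \<noteq> Idm C (Cod C \<sigma>) \<and>
    (\<exists>z\<in>double_hom C \<sigma> (Cod C \<tau>). E = double_hom_act C \<sigma> \<tau> z)"
  then obtain \<tau> b g where \<tau>: "\<tau> \<in> Fm" "Dom C \<tau> = Cod C \<sigma>" "\<tau> \<noteq> Idm C (Cod C \<sigma>)"
    and g: "g \<in> Arr C" "Dom C g = Cod C \<tau>" "Cod C g = Cod C \<sigma>"
    and E: "E = double_hom_act C \<sigma> \<tau> (hom_copy C \<sigma> b g)"
    unfolding Bex_def double_hom_iff by blast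
  have "E = hom_copy C \<sigma> b (Comp C g \<tau>)"
    using double_hom_act_hom_copy[OF assms(1) _ g(1,2)] degeneracy_in_Arr \<tau> E by simp
  then have "E \<subseteq> {Comp C g \<tau>, \<sigma>}" using hom_copy_subset(2) by simp
  then have "Comp C g \<tau> = Idm C (Dom C \<tau>)" using assms(2,3) \<tau>(2) by auto
  then show False using degeneracy_retraction_eq_Idm[OF \<tau>(1) g(1,2)] g \<tau> by simp
qed

text \<open>In the glued presheaf, \<open>{\<sigma>}\<close> is the restriction along \<open>\<sigma>\<close> of the identity element of
  either copy, and both are nondegenerate; elegance forces them to coincide, i.e.\ the
  identity factors through \<open>\<sigma>\<close>.\<close>
lemma degeneracy_has_section:
  assumes elegant: "elegant_wrt C Fm TYPE('m set)" and \<sigma>: "\<sigma> \<in> Fm"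
  shows "\<exists>\<delta>\<in>Arr C. Dom C \<delta> = Cod C \<sigma> \<and> Cod C \<delta> = Dom C \<sigma> \<and> Comp C \<sigma> \<delta> = Idm C (Cod C \<sigma>)"
proof (rule ccontr)
  assume no_section: "\<not> ?thesis"
  define s where "s = Cod C \<sigma>"
  have \<sigma>_arr: "\<sigma> \<in> Arr C" using \<sigma> degeneracy_in_Arr by blast
  have s: "s \<in> Obj C" unfolding s_def using \<sigma>_arr Cod_in_Obj by blast
  have not_factors: "\<not> factors_through C \<sigma> (Idm C s)"
    using no_section s unfolding factors_through_def s_def by auto
  then have \<sigma>_ne: "\<sigma> \<noteq> Idm C s" using factors_through_self[OF \<sigma>_arr] by auto
  define Q where "Q = (\<lambda>(\<tau>, E). \<tau> \<in> Fm \<and> Dom C \<tau> = Dom C \<sigma> \<and>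
      E \<in> double_hom C \<sigma> (Cod C \<tau>) \<and>
      nondegenerate C Fm (double_hom C \<sigma>) (double_hom_act C \<sigma>) (Cod C \<tau>) E \<and>
      {\<sigma>} = double_hom_act C \<sigma> \<tau> E)"
  have "Q (\<sigma>, hom_copy C \<sigma> b (Idm C s))" for b
  proof -
    have "Idm C s \<in> Arr C" "Dom C (Idm C s) = s" "Cod C (Idm C s) = s" using Idm_in_Arr s by auto
    then have "hom_copy C \<sigma> b (Idm C s) \<in> double_hom C \<sigma> s" unfolding double_hom_iff s_def by blast
    moreover have "double_hom_act C \<sigma> \<sigma> (hom_copy C \<sigma> b (Idm C s)) = {\<sigma>}"
      using double_hom_act_hom_copy[OF \<sigma>_arr \<sigma>_arr Idm_in_Arr[OF s]] hom_copy_self[OF \<sigma>_arr]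
        \<sigma>_arr s s_def by simp
    ultimately show ?thesis
      unfolding Q_def using \<sigma> double_hom_Idm_nondegenerate[OF \<sigma>_arr _ hom_copy_subset(1)] \<sigma>_ne s_def
      by auto
  qed
  moreover have "{\<sigma>} \<in> double_hom C \<sigma> (Dom C \<sigma>)"
    unfolding double_hom_iff using \<sigma>_arr hom_copy_self[OF \<sigma>_arr] by blast
  then have "\<exists>!p. Q p"
    unfolding Q_def by (rule elegant[unfolded elegant_wrt_def, rule_format,
      OF is_presheaf_double_hom[OF \<sigma>_arr] Dom_in_Obj[OF \<sigma>_arr]])
  ultimately have "hom_copy C \<sigma> False (Idm C s) = hom_copy C \<sigma> True (Idm C s)"
    by (metis prod.inject)
  then show False using not_factors \<sigma>_ne unfolding hom_copy_def by auto
qed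

end

section \<open>Lifting zigzags\<close>

definition face_cospans_complete :: "('o, 'm) cat \<Rightarrow> 'm set \<Rightarrow> bool" where
  "face_cospans_complete C Fp \<longleftrightarrow> (\<forall>t\<in>Fp. \<forall>h\<in>Arr C. Cod C h = Cod C t \<longrightarrow>
     (\<exists>f' g'. f' \<in> Arr C \<and> g' \<in> Arr C \<and> Dom C f' = Dom C g' \<and> Cod C f' = Dom C h \<and>
        Cod C g' = Dom C t \<and> Comp C h f' = Comp C t g'))"

lemma face_cospans_complete_if_pullbacks:
  assumes "\<forall>t\<in>Fp. \<forall>h\<in>Arr C. Cod C h = Cod C t \<longrightarrow> (\<exists>f' g'. is_pullback C t h f' g')"
  shows "face_cospans_complete C Fp"
  using assms unfolding face_cospans_complete_def is_pullback_def by (meson Bex_def)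

context reedy_category
begin

text \<open>Factor the arrow as a face map after a degeneracy \<open>s\<close>; a section of \<open>s\<close> moves the
  element of \<open>X\<close> along \<open>s\<close>, injectivity of \<open>\<alpha>\<close> showing that \<open>s\<close> pulls it back.\<close>
lemma lies_over_via_face:
  assumes elegant: "elegant_wrt C Fm TYPE('m set)"
    and X: "is_presheaf C X actX" and Y: "is_presheaf C Y actY"
    and \<alpha>: "is_nat_trans C X actX Y actY \<alpha>" and inj: "\<forall>a\<in>Obj C. inj_on (\<alpha> a) (X a)"
    and over: "lies_over C X actY \<alpha> f q (c, y)" and y: "y \<in> Y c"
  obtains t q' where "t \<in> Fp" "(q, q') \<in> connected C X actX" "lies_over C X actY \<alpha> t q' (c, y)"
proof -
  obtain a x where q: "q = (a, x)" by fastforce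
  have a: "a \<in> Obj C" and x: "x \<in> X a" and f: "f \<in> Arr C" "Dom C f = a" "Cod C f = c"
    and fy: "actY f y = \<alpha> a x"
    using over q unfolding lies_over_def elements_def by auto
  obtain s t where s: "s \<in> Fm" and t: "t \<in> Fp" and st: "Dom C s = a" "Cod C s = Dom C t"
    "Cod C t = c" "Comp C t s = f"
    using reedy_factorization[OF f(1)] f by metis
  have s_arr: "s \<in> Arr C" and t_arr: "t \<in> Arr C" using s t degeneracy_in_Arr face_in_Arr by auto
  obtain \<delta> where \<delta>: "\<delta> \<in> Arr C" "Dom C \<delta> = Cod C s" "Cod C \<delta> = a" "Comp C s \<delta> = Idm C (Cod C s)"
    using degeneracy_has_section[OF elegant s] st by auto
  define x' where "x' = actX \<delta> x"
  have ty: "actY t y \<in> Y (Cod C s)" using presheaf_act_in[OF Y t_arr] y st by simp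
  have x': "x' \<in> X (Cod C s)" unfolding x'_def using presheaf_act_in[OF X \<delta>(1)] \<delta> x by simp
  have sty: "actY s (actY t y) = \<alpha> a x" using presheaf_act_Comp[OF Y s_arr t_arr st(2)] y st fy by simp
  have "\<alpha> (Cod C s) x' = actY \<delta> (\<alpha> a x)" unfolding x'_def using nat_trans_natural[OF \<alpha> \<delta>(1)] \<delta> x by simp
  also have "\<dots> = actY (Comp C s \<delta>) (actY t y)"
    using presheaf_act_Comp[OF Y \<delta>(1) s_arr _ ty] \<delta> st sty by simp
  finally have \<alpha>x': "\<alpha> (Cod C s) x' = actY t y" using presheaf_act_Idm[OF Y _ ty] \<delta>(4) Cod_in_Obj[OF s_arr] by simp
  have "\<alpha> a (actX s x') = \<alpha> a x" using nat_trans_natural[OF \<alpha> s_arr] x' \<alpha>x' sty st by simp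
  then have "actX s x' = x" using inj_onD[OF bspec[OF inj a]] presheaf_act_in[OF X s_arr x'] x st by simp
  then have "(q, (Cod C s, x')) \<in> el_arrows C X actX" unfolding el_arrows_def using q s_arr x' st by blast
  moreover have "lies_over C X actY \<alpha> t (Cod C s, x') (c, y)"
    unfolding lies_over_def elements_def using t_arr st x' \<alpha>x' Cod_in_Obj[OF s_arr] by simp
  ultimately show thesis using that t el_arrows_in_connected by blast
qed

lemma lies_over_lift:
  assumes elegant: "elegant_wrt C Fm TYPE('m set)"
    and square: "face_cospans_complete C Fp"
    and X: "is_presheaf C X actX" and Y: "is_presheaf C Y actY"
    and \<alpha>: "is_nat_trans C X actX Y actY \<alpha>" and inj: "\<forall>a\<in>Obj C. inj_on (\<alpha> a) (X a)"
    and h: "h \<in> Arr C" and y: "y \<in> Y (Cod C h)" and over: "lies_over C X actY \<alpha> f q (Cod C h, y)"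
  shows "\<exists>f' q'. (q, q') \<in> connected C X actX \<and> lies_over C X actY \<alpha> f' q' (Dom C h, actY h y)"
proof -
  obtain t q1 where t: "t \<in> Fp" and qq1: "(q, q1) \<in> connected C X actX"
    and over1: "lies_over C X actY \<alpha> t q1 (Cod C h, y)"
    using lies_over_via_face[OF elegant X Y \<alpha> inj over y] by blast
  obtain a x where q1: "q1 = (a, x)" by fastforce
  have t_arr: "t \<in> Arr C" "Dom C t = a" "Cod C t = Cod C h" and x: "x \<in> X a" and ty: "actY t y = \<alpha> a x"
    using over1 q1 face_in_Arr[OF t] unfolding lies_over_def elements_def by auto
  obtain f' g' where sq: "f' \<in> Arr C" "g' \<in> Arr C" "Dom C f' = Dom C g'" "Cod C f' = Dom C h"
    "Cod C g' = a" "Comp C h f' = Comp C t g'"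
    using square t h t_arr unfolding face_cospans_complete_def by metis
  have xg': "x \<in> X (Cod C g')" using x sq by simp
  have "actY f' (actY h y) = actY (Comp C t g') y" using presheaf_act_Comp[OF Y sq(1) h sq(4) y] sq by simp
  also have "\<dots> = \<alpha> (Dom C g') (actX g' x)"
    using presheaf_act_Comp[OF Y sq(2) t_arr(1)] nat_trans_natural[OF \<alpha> sq(2) xg'] sq t_arr y ty by simp
  finally have "lies_over C X actY \<alpha> f' (Dom C g', actX g' x) (Dom C h, actY h y)"
    unfolding lies_over_def elements_def using sq presheaf_act_in[OF X sq(2) xg'] Dom_in_Obj by auto
  moreover have "((Dom C g', actX g' x), q1) \<in> el_arrows C X actX"
    unfolding el_arrows_def using sq xg' q1 by blast
  then have "(q, (Dom C g', actX g' x)) \<in> connected C X actX"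
    using qq1 el_arrows_in_connected equiv_connected by (metis equivE symE transE)
  ultimately show ?thesis by blast
qed

end

theorem mainTheorem7:
  fixes C :: "('o, 'm) cat" and deg :: "'o \<Rightarrow> 'd::wellorder"
    and Fp Fm :: "'m set"
  assumes reedy: "is_reedy C deg Fp Fm"
    and elegant: "elegant_wrt C Fm TYPE('m set)"
    and elegant_x: "elegant_wrt C Fm TYPE('x)"
    and elegant_y: "elegant_wrt C Fm TYPE('y)"
    and pb: "\<And>f g. f \<in> Fp \<Longrightarrow> g \<in> Arr C \<Longrightarrow> Cod C g = Cod C f \<Longrightarrow>
             \<exists>f' g'. is_pullback C f g f' g' \<and> f' \<in> Fp \<and>
                     (g \<in> Fp \<longrightarrow> g' \<in> Fp) \<and> (g \<in> Fm \<longrightarrow> g' \<in> Fm)"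
  shows "\<And>(X :: 'o \<Rightarrow> 'x set) actX (Y :: 'o \<Rightarrow> 'y set) actY \<alpha>.
           is_presheaf C X actX \<Longrightarrow> is_presheaf C Y actY \<Longrightarrow>
           is_nat_trans C X actX Y actY \<alpha> \<Longrightarrow>
           is_mono_pshf_wrt C X actX Y actY \<alpha> TYPE('x \<times> 'x) \<Longrightarrow>
           inj_on (colim_map C Y actY \<alpha>) (colim C X actX)"
proof -
  interpret reedy_category C deg Fp Fm by (rule reedy_category.intro[OF reedy])
  have square: "face_cospans_complete C Fp"
    using pb by (intro face_cospans_complete_if_pullbacks) blast
  fix X :: "'o \<Rightarrow> 'x set" and actX and Y :: "'o \<Rightarrow> 'y set" and actY \<alpha>
  assume X: "is_presheaf C X actX" and Y: "is_presheaf C Y actY"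
    and \<alpha>: "is_nat_trans C X actX Y actY \<alpha>" and mono: "is_mono_pshf_wrt C X actX Y actY \<alpha> TYPE('x \<times> 'x)"
  have inj: "\<forall>a\<in>Obj C. inj_on (\<alpha> a) (X a)" using mono_pshf_imp_inj_on[OF X \<alpha> mono] by blast
  show "inj_on (colim_map C Y actY \<alpha>) (colim C X actX)"
    using inj_on_colim_map[OF X Y \<alpha> inj] lies_over_lift[OF elegant square X Y \<alpha> inj] by blast
qed

end
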